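(* Let $p,q$ be positive integers with $p/q\ge 2$, let $G$ be a connected graph with a fixed orientation $\overrightarrow{G}$, and let $\varphi,\psi$ be two $(p,q)$-labellings of $G$. Then $\varphi$ can be transformed into $\psi$ through a finite sequence of edge cut relabellings if and only if $\varphi(C)=\psi(C)$ for every cycle $C$ of $G$.
   Context: Fix an orientation $\overrightarrow{G}$ of $G$. For an edge-labelling $\varphi:E(G)\to\{0,1,\dots,p-1\}$ and a cycle $C$ with a chosen direction of traversal, let $C^+$ be the edges of $C$ whose orientation agrees with the traversal and $C^-$ the others, and define $\varphi(C)=\sum_{e\in C^+}\varphi(e)+\sum_{e\in C^-}(p-\varphi(e))$, the sum taken in $\mathbb{Z}$. A $(p,q)$-labelling is an edge-labelling $\varphi:E(G)\to\{0,\dots,p-1\}$ such that (P1) $q\le\varphi(e)\le p-q$ for every edge $e$, and (P2) $\varphi(C)\equiv 0\pmod p$ for every cycle $C$. For $\emptyset\ne X\subsetneq V(G)$, let $\partial^+(X)$ (resp. $\partial^-(X)$) be the set of arcs of $\overrightarrow{G}$ from $X$ to $V(G)\setminus X$ (resp. from $V(G)\setminus X$ to $X$). Given a $(p,q)$-labelling $\varphi$ and an integer $1\le\alpha\le p-1$ such that $\varphi(e)\ge q+\alpha$ for all $e\in\partial^+(X)$ and $\varphi(e)\le p-q-\alpha$ for all $e\in\partial^-(X)$, the edge cut relabelling of $\varphi$ on $\partial(X)$ by $\alpha$ is the labelling $\varphi'$ with $\varphi'(e)=\varphi(e)-\alpha$ for $e\in\partial^+(X)$, $\varphi'(e)=\varphi(e)+\alpha$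 for $e\in\partial^-(X)$, and $\varphi'(e)=\varphi(e)$ otherwise. *)

theory Defs
  imports Complex_Main
begin

definition oriented_graph :: "'v set \<Rightarrow> ('v \<times> 'v) set \<Rightarrow> bool" where
  "oriented_graph V E \<longleftrightarrow> finite V \<and> E \<subseteq> V \<times> V \<and> (\<forall>v. (v, v) \<notin> E)
     \<and> (\<forall>u v. (u, v) \<in> E \<longrightarrow> (v, u) \<notin> E)"

definition connected_graph :: "'v set \<Rightarrow> ('v \<times> 'v) set \<Rightarrow> bool" where
  "connected_graph V E \<longleftrightarrow> (\<forall>u\<in>V. \<forall>v\<in>V. (u, v) \<in> (E \<union> E\<inverse>)\<^sup>*)"

definition is_cycle :: "'v set \<Rightarrow> ('v \<times> 'v) set \<Rightarrow> 'v list \<Rightarrow> bool" where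
  "is_cycle V E vs \<longleftrightarrow> length vs \<ge> 3 \<and> distinct vs \<and> set vs \<subseteq> V \<and>
     (\<forall>i < length vs. (vs ! i, vs ! ((i + 1) mod length vs)) \<in> E \<union> E\<inverse>)"

definition cycle_value :: "('v \<times> 'v) set \<Rightarrow> int \<Rightarrow> ('v \<times> 'v \<Rightarrow> int) \<Rightarrow> 'v list \<Rightarrow> int" where
  "cycle_value E p \<phi> vs =
     (\<Sum>i < length vs.
        let u = vs ! i; w = vs ! ((i + 1) mod length vs) in
        if (u, w) \<in> E then \<phi> (u, w) else p - \<phi> (w, u))"

definition pq_labelling :: "'v set \<Rightarrow> ('v \<times> 'v) set \<Rightarrow> int \<Rightarrow> int \<Rightarrow> ('v \<times> 'v \<Rightarrow> int) \<Rightarrow> bool" where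
  "pq_labelling V E p q \<phi> \<longleftrightarrow>
     (\<forall>e\<in>E. 0 \<le> \<phi> e \<and> \<phi> e \<le> p - 1) \<and>
     (\<forall>e\<in>E. q \<le> \<phi> e \<and> \<phi> e \<le> p - q) \<and>
     (\<forall>vs. is_cycle V E vs \<longrightarrow> cycle_value E p \<phi> vs mod p = 0)"

definition out_cut :: "'v set \<Rightarrow> ('v \<times> 'v) set \<Rightarrow> 'v set \<Rightarrow> ('v \<times> 'v) set" where
  "out_cut V E X = {(u, v) \<in> E. u \<in> X \<and> v \<in> V - X}"

definition in_cut :: "'v set \<Rightarrow> ('v \<times> 'v) set \<Rightarrow> 'v set \<Rightarrow> ('v \<times> 'v) set" where
  "in_cut V E X = {(u, v) \<in> E. u \<in> V - X \<and> v \<in> X}"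

definition cut_relabel_step ::
  "'v set \<Rightarrow> ('v \<times> 'v) set \<Rightarrow> int \<Rightarrow> int \<Rightarrow> ('v \<times> 'v \<Rightarrow> int) \<Rightarrow> ('v \<times> 'v \<Rightarrow> int) \<Rightarrow> bool" where
  "cut_relabel_step V E p q \<phi> \<phi>' \<longleftrightarrow> pq_labelling V E p q \<phi> \<and>
     (\<exists>X \<alpha>. X \<noteq> {} \<and> X \<subset> V \<and> 1 \<le> \<alpha> \<and> \<alpha> \<le> p - 1 \<and>
        (\<forall>e\<in>out_cut V E X. \<phi> e \<ge> q + \<alpha>) \<and>
        (\<forall>e\<in>in_cut V E X. \<phi> e \<le> p - q - \<alpha>) \<and>
        (\<forall>e\<in>E. \<phi>' e = (if e \<in> out_cut V E X then \<phi> e - \<alpha>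
                         else if e \<in> in_cut V E X then \<phi> e + \<alpha> else \<phi> e)))"

definition cut_reachable ::
  "'v set \<Rightarrow> ('v \<times> 'v) set \<Rightarrow> int \<Rightarrow> int \<Rightarrow> ('v \<times> 'v \<Rightarrow> int) \<Rightarrow> ('v \<times> 'v \<Rightarrow> int) \<Rightarrow> bool" where
  "cut_reachable V E p q \<phi> \<psi> \<longleftrightarrow>
     (\<exists>\<chi>. (cut_relabel_step V E p q)\<^sup>*\<^sup>* \<phi> \<chi> \<and> (\<forall>e\<in>E. \<chi> e = \<psi> e))"

end

theory Submission
  imports Defs
begin

text \<open>Two labellings have equal cycle values exactly when their difference is a potential
  difference: \<open>\<phi>(u,w) - \<psi>(u,w) = F u - F w\<close> on every arc. An edge cut relabelling by \<open>\<alpha>\<close> changes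
  the labelling by the potential \<open>-\<alpha>\<close> on \<open>X\<close> and \<open>0\<close> elsewhere, so it preserves cycle values.
  Conversely, for a cycle-preserving pair the potential \<open>F\<close> exists by walking from a root in
  the connected graph, closed walks having zero signed sum since they decompose into cycles.
  Then \<open>\<phi>\<close> is moved to \<open>\<psi>\<close> by repeatedly relabelling by 1 on the cut around the top level set
  of \<open>F\<close>: arcs leaving it carry \<open>\<phi> = \<psi> + (F u - F w) \<ge> q + 1\<close>, arcs entering it \<open>\<phi> \<le> p - q - 1\<close>,
  so the step is admissible, and the top level of \<open>F\<close> drops until \<open>F\<close> is constant.\<close>

fun walk_sum :: "('v \<Rightarrow> 'v \<Rightarrow> int) \<Rightarrow> 'v list \<Rightarrow> int" where
  "walk_sum d (x # y # zs) = d x y + walk_sum d (y # zs)"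
| "walk_sum d _ = 0"

lemma walk_sum_append: "walk_sum d (xs @ y # ys) = walk_sum d (xs @ [y]) + walk_sum d (y # ys)"
  by (induction xs rule: induct_list012) auto

lemma walk_sum_snoc: "xs \<noteq> [] \<Longrightarrow> walk_sum d (xs @ [y]) = walk_sum d xs + d (last xs) y"
  by (induction xs rule: induct_list012) auto

lemma walk_sum_detour:
  "walk_sum d (ys @ v # zs @ v # us) = walk_sum d (ys @ v # us) + walk_sum d (v # zs @ [v])"
  using walk_sum_append[of d ys v "zs @ v # us"] walk_sum_append[of d ys v us]
    walk_sum_append[of d "v # zs" v us]
  by simp

lemma walk_sum_conv_sum: "walk_sum d xs = (\<Sum>i < length xs - 1. d (xs ! i) (xs ! Suc i))"
  by (induction d xs rule: walk_sum.induct) (simp_all add: sum.lessThan_Suc_shift del: sum.lessThan_Suc)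

lemma walk_sum_rev:
  assumes "\<And>x y. A x y \<Longrightarrow> d x y + d y x = 0" and "successively A xs"
  shows "walk_sum d (rev xs) = - walk_sum d xs"
  using assms(2)
proof (induction xs rule: induct_list012)
  case (3 x y zs)
  have "walk_sum d (rev (x # y # zs)) = walk_sum d (rev (y # zs)) + d y x"
    using walk_sum_append[of d "rev zs" y "[x]"] by simp
  then show ?case using 3 assms(1)[of x y] by simp
qed auto

lemma walk_sum_telescope:
  assumes "\<And>x y. A x y \<Longrightarrow> d x y = g x - g y" and "successively A xs" and "xs \<noteq> []"
  shows "walk_sum d xs = g (hd xs) - g (last xs)"
  using assms(2,3) by (induction xs rule: induct_list012) (auto simp: assms(1))

lemma nth_closed_walk:
  assumes "i < length vs"
  shows "(vs @ [hd vs]) ! i = vs ! i"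
    and "(vs @ [hd vs]) ! Suc i = vs ! ((i + 1) mod length vs)"
proof -
  show "(vs @ [hd vs]) ! i = vs ! i" using assms by (simp add: nth_append)
  show "(vs @ [hd vs]) ! Suc i = vs ! ((i + 1) mod length vs)"
  proof (cases "Suc i < length vs")
    case False
    then have "Suc i = length vs" using assms by simp
    moreover have "vs \<noteq> []" using assms by auto
    ultimately show ?thesis by (simp add: hd_conv_nth)
  qed (simp add: nth_append)
qed

lemma walk_sum_closed_conv_sum:
  assumes "vs \<noteq> []"
  shows "walk_sum d (vs @ [hd vs]) = (\<Sum>i < length vs. d (vs ! i) (vs ! ((i + 1) mod length vs)))"
  unfolding walk_sum_conv_sum by (rule sum.cong) (simp_all add: nth_closed_walk)

lemma successively_closed_conv_nth:
  "successively P (vs @ [hd vs]) \<longleftrightarrow> (\<forall>i < length vs. P (vs ! i) (vs ! ((i + 1) mod length vs)))"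
  unfolding successively_conv_nth by (auto simp: nth_closed_walk)


abbreviation adjacent :: "('v \<times> 'v) set \<Rightarrow> 'v \<Rightarrow> 'v \<Rightarrow> bool" where
  "adjacent E x y \<equiv> (x, y) \<in> E \<union> E\<inverse>"

lemma is_cycle_iff_closed_walk:
  "is_cycle V E vs \<longleftrightarrow>
     3 \<le> length vs \<and> distinct vs \<and> set vs \<subseteq> V \<and> successively (adjacent E) (vs @ [hd vs])"
  unfolding is_cycle_def successively_closed_conv_nth ..

definition signed_label :: "('v \<times> 'v) set \<Rightarrow> ('v \<times> 'v \<Rightarrow> int) \<Rightarrow> 'v \<Rightarrow> 'v \<Rightarrow> int" where
  "signed_label E f u w = (if (u, w) \<in> E then f (u, w) else - f (w, u))"

lemma signed_label_antisym:
  assumes "oriented_graph V E" and "adjacent E x y"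
  shows "signed_label E f x y + signed_label E f y x = 0"
  using assms unfolding oriented_graph_def signed_label_def by auto

lemma signed_label_potential:
  assumes "\<And>u w. (u, w) \<in> E \<Longrightarrow> f (u, w) = g u - g w" and "adjacent E x y"
  shows "signed_label E f x y = g x - g y"
  using assms unfolding signed_label_def by auto

lemma cycle_value_diff:
  assumes "vs \<noteq> []"
  shows "cycle_value E p \<phi> vs - cycle_value E p \<psi> vs
           = walk_sum (signed_label E (\<lambda>e. \<phi> e - \<psi> e)) (vs @ [hd vs])"
  unfolding cycle_value_def walk_sum_closed_conv_sum[OF assms] sum_subtractf[symmetric]
  by (rule sum.cong) (auto simp: Let_def signed_label_def)

lemma cycle_value_eq_if_potential:
  assumes "is_cycle V E vs" and "\<And>u w. (u, w) \<in> E \<Longrightarrow> \<phi>' (u, w) - \<phi> (u, w) = g u - g w"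
  shows "cycle_value E p \<phi>' vs = cycle_value E p \<phi> vs"
proof -
  have walk: "successively (adjacent E) (vs @ [hd vs])" and "vs \<noteq> []"
    using assms(1) unfolding is_cycle_iff_closed_walk by auto
  have "cycle_value E p \<phi>' vs - cycle_value E p \<phi> vs
          = walk_sum (signed_label E (\<lambda>e. \<phi>' e - \<phi> e)) (vs @ [hd vs])"
    using \<open>vs \<noteq> []\<close> by (rule cycle_value_diff)
  also have "\<dots> = g (hd (vs @ [hd vs])) - g (last (vs @ [hd vs]))"
    using walk by (intro walk_sum_telescope[of "adjacent E"] signed_label_potential assms(2)) auto
  also have "\<dots> = 0" using \<open>vs \<noteq> []\<close> by simp
  finally show ?thesis by simp
qed


lemma set_walk_subset:
  assumes "E \<subseteq> V \<times> V" and "successively (adjacent E) xs" and "2 \<le> length xs"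
  shows "set xs \<subseteq> V"
  using assms(2,3)
proof (induction xs rule: induct_list012)
  case (3 x y zs)
  then show ?case using assms(1) by (cases zs) auto
qed auto

lemma successively_append_Cons_iff:
  "successively P (xs @ v # ys) \<longleftrightarrow> successively P (xs @ [v]) \<and> successively P (v # ys)"
  by (cases "xs = []") (auto simp: successively_append_iff)

lemma closed_walk_sum_eq_0:
  assumes og: "oriented_graph V E"
    and antisym: "\<And>x y. adjacent E x y \<Longrightarrow> d x y + d y x = 0"
    and cycles: "\<And>vs. is_cycle V E vs \<Longrightarrow> walk_sum d (vs @ [hd vs]) = 0"
  shows "successively (adjacent E) (cs @ [hd cs]) \<Longrightarrow> walk_sum d (cs @ [hd cs]) = 0"
proof (induction "length cs" arbitrary: cs rule: less_induct)
  case less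
  show ?case
  proof (cases "distinct cs")
    case True
    consider "cs = []" | a where "cs = [a]" | a b where "cs = [a, b]" | "3 \<le> length cs"
      by (cases cs; cases "tl cs"; cases "tl (tl cs)") auto
    then show ?thesis
    proof cases
      case 2
      then show ?thesis using less.prems og unfolding oriented_graph_def by auto
    next
      case (3 a b)
      then show ?thesis using less.prems antisym[of a b] by simp
    next
      case 4
      moreover have "set cs \<subseteq> V"
        using set_walk_subset[OF _ less.prems] og 4 unfolding oriented_graph_def by auto
      ultimately show ?thesis
        using True less.prems by (intro cycles) (simp add: is_cycle_iff_closed_walk)
    qed simp
  next
    case False
    then obtain ys v zs us where cs: "cs = ys @ [v] @ zs @ [v] @ us"
      using not_distinct_decomp by blast
    define h where "h = hd cs"
    have walk: "successively (adjacent E) (ys @ v # zs @ v # us @ [h])"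
      using less.prems cs unfolding h_def by simp
    have "successively (adjacent E) (ys @ [v])" and "successively (adjacent E) (v # zs @ [v])"
      and "successively (adjacent E) (v # us @ [h])"
      using walk successively_append_Cons_iff[of "adjacent E" ys v "zs @ v # us @ [h]"]
        successively_append_Cons_iff[of "adjacent E" "v # zs" v "us @ [h]"]
      by simp_all
    then have "successively (adjacent E) (v # zs @ [v])"
      and "successively (adjacent E) (ys @ v # us @ [h])"
      using successively_append_Cons_iff[of "adjacent E" ys v "us @ [h]"] by simp_all
    moreover have "hd (ys @ v # us) = h" using cs unfolding h_def by (cases ys) auto
    ultimately have "walk_sum d (v # zs @ [v]) = 0" and "walk_sum d (ys @ v # us @ [h]) = 0"
      using less.hyps[of "v # zs"] less.hyps[of "ys @ v # us"] cs by simp_all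
    then show ?thesis using cs walk_sum_detour[of d ys v zs "us @ [h]"] unfolding h_def by simp
  qed
qed


lemma rtrancl_imp_walk:
  assumes "(u, v) \<in> R\<^sup>*"
  shows "\<exists>xs. xs \<noteq> [] \<and> hd xs = u \<and> last xs = v \<and> successively (\<lambda>x y. (x, y) \<in> R) xs"
  using assms
proof (induction rule: rtrancl_induct)
  case base
  show ?case by (intro exI[of _ "[u]"]) simp
next
  case (step y z)
  then obtain xs where "xs \<noteq> []" "hd xs = u" "last xs = y" "successively (\<lambda>x y. (x, y) \<in> R) xs"
    by blast
  then show ?case using step(2) by (intro exI[of _ "xs @ [z]"]) (auto simp: successively_append_iff)
qed

lemma potential_if_closed_walk_sums_eq_0:
  assumes EV: "E \<subseteq> V \<times> V" and conn: "connected_graph V E"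
    and antisym: "\<And>x y. adjacent E x y \<Longrightarrow> d x y + d y x = 0"
    and closed: "\<And>cs. successively (adjacent E) (cs @ [hd cs]) \<Longrightarrow> walk_sum d (cs @ [hd cs]) = 0"
  shows "\<exists>F. \<forall>u w. (u, w) \<in> E \<longrightarrow> d u w = F u - F w"
proof (cases "V = {}")
  case True
  then show ?thesis using EV by auto
next
  case False
  then obtain r where r: "r \<in> V" by auto
  let ?walk = "\<lambda>v xs. xs \<noteq> [] \<and> hd xs = r \<and> last xs = v \<and> successively (adjacent E) xs"
  define P where "P v = (SOME xs. ?walk v xs)" for v
  have P: "?walk v (P v)" if "v \<in> V" for v
  proof -
    have "(r, v) \<in> (E \<union> E\<inverse>)\<^sup>*" using conn r that unfolding connected_graph_def by blast
    then show ?thesis unfolding P_def by (rule someI_ex[OF rtrancl_imp_walk])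
  qed
  have "d u w = walk_sum d (P w) - walk_sum d (P u)" if uw: "(u, w) \<in> E" for u w
  proof -
    have Pu: "?walk u (P u)" and Pw: "?walk w (P w)" using uw EV P by auto
    define C where "C = P u @ rev (P w)"
    have walk_C: "successively (adjacent E) C"
      using Pu Pw uw unfolding C_def
      by (auto simp: successively_append_iff hd_rev elim: successively_mono)
    have "C = (P u @ butlast (rev (P w))) @ [hd (P u @ butlast (rev (P w)))]"
      using Pu Pw unfolding C_def by (cases "P w") auto
    then have "walk_sum d C = 0" using closed walk_C by metis
    moreover obtain rest where rest: "rev (P w) = w # rest"
      using Pw by (cases "rev (P w)") (auto simp flip: hd_rev)
    then have "walk_sum d C = walk_sum d (P u) + d u w + walk_sum d (rev (P w))"
      using Pu walk_sum_append[of d "P u" w rest] walk_sum_snoc[of "P u" d w] unfolding C_def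
      by simp
    moreover have "walk_sum d (rev (P w)) = - walk_sum d (P w)"
      using antisym Pw by (intro walk_sum_rev[of "adjacent E"]) auto
    ultimately show ?thesis by simp
  qed
  then show ?thesis by (intro exI[of _ "\<lambda>v. - walk_sum d (P v)"]) auto
qed


definition cut_relabelling ::
  "'v set \<Rightarrow> ('v \<times> 'v) set \<Rightarrow> 'v set \<Rightarrow> int \<Rightarrow> ('v \<times> 'v \<Rightarrow> int) \<Rightarrow> 'v \<times> 'v \<Rightarrow> int" where
  "cut_relabelling V E X \<alpha> \<phi> e =
     (if e \<in> out_cut V E X then \<phi> e - \<alpha> else if e \<in> in_cut V E X then \<phi> e + \<alpha> else \<phi> e)"

lemma cut_relabel_step_iff:
  "cut_relabel_step V E p q \<phi> \<phi>' \<longleftrightarrow> pq_labelling V E p q \<phi> \<and>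
     (\<exists>X \<alpha>. X \<noteq> {} \<and> X \<subset> V \<and> 1 \<le> \<alpha> \<and> \<alpha> \<le> p - 1 \<and>
        (\<forall>e\<in>out_cut V E X. q + \<alpha> \<le> \<phi> e) \<and> (\<forall>e\<in>in_cut V E X. \<phi> e \<le> p - q - \<alpha>) \<and>
        (\<forall>e\<in>E. \<phi>' e = cut_relabelling V E X \<alpha> \<phi> e))"
  unfolding cut_relabel_step_def cut_relabelling_def ..

lemma cut_relabelling_potential:
  assumes "E \<subseteq> V \<times> V" and "(u, w) \<in> E"
  shows "cut_relabelling V E X \<alpha> \<phi> (u, w) - \<phi> (u, w) = \<alpha> * of_bool (w \<in> X) - \<alpha> * of_bool (u \<in> X)"
  using assms unfolding cut_relabelling_def out_cut_def in_cut_def by auto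

lemma cut_relabel_step_cycle_value:
  assumes "E \<subseteq> V \<times> V" and "cut_relabel_step V E p q \<phi> \<phi>'" and "is_cycle V E vs"
  shows "cycle_value E p \<phi>' vs = cycle_value E p \<phi> vs"
proof -
  obtain X \<alpha> where \<phi>': "\<forall>e\<in>E. \<phi>' e = cut_relabelling V E X \<alpha> \<phi> e"
    using assms(2) unfolding cut_relabel_step_iff by blast
  have "\<phi>' (u, w) - \<phi> (u, w) = - \<alpha> * of_bool (u \<in> X) - - \<alpha> * of_bool (w \<in> X)"
    if "(u, w) \<in> E" for u w
    using \<phi>' that cut_relabelling_potential[OF assms(1) that] by simp
  then show ?thesis by (rule cycle_value_eq_if_potential[OF assms(3)])
qed

lemma cut_reachable_cycle_value:
  assumes "E \<subseteq> V \<times> V" and "cut_reachable V E p q \<phi> \<psi>" and "is_cycle V E vs"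
  shows "cycle_value E p \<phi> vs = cycle_value E p \<psi> vs"
proof -
  obtain \<chi> where steps: "(cut_relabel_step V E p q)\<^sup>*\<^sup>* \<phi> \<chi>" and "\<forall>e\<in>E. \<chi> e = \<psi> e"
    using assms(2) unfolding cut_reachable_def by blast
  then have "cycle_value E p \<psi> vs = cycle_value E p \<chi> vs"
    by (intro cycle_value_eq_if_potential[OF assms(3), of _ _ "\<lambda>_. 0"]) auto
  also have "\<dots> = cycle_value E p \<phi> vs"
    using steps by induction (simp_all add: cut_relabel_step_cycle_value[OF assms(1) _ assms(3)])
  finally show ?thesis by simp
qed

lemma pq_labelling_if_potential:
  assumes "pq_labelling V E p q \<psi>" and "q > 0" and "\<forall>e\<in>E. q \<le> \<phi> e \<and> \<phi> e \<le> p - q"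
    and "\<And>u w. (u, w) \<in> E \<Longrightarrow> \<phi> (u, w) - \<psi> (u, w) = F u - F w"
  shows "pq_labelling V E p q \<phi>"
  unfolding pq_labelling_def
proof (intro conjI allI impI)
  fix vs assume "is_cycle V E vs"
  then have "cycle_value E p \<phi> vs = cycle_value E p \<psi> vs"
    using assms(4) by (rule cycle_value_eq_if_potential)
  then show "cycle_value E p \<phi> vs mod p = 0"
    using assms(1) \<open>is_cycle V E vs\<close> unfolding pq_labelling_def by simp
qed (use assms(2,3) in force)+


lemma cut_relabel_step_at_top_level:
  assumes EV: "E \<subseteq> V \<times> V" and "2 \<le> p" and "q > 0"
    and \<psi>: "pq_labelling V E p q \<psi>" and \<phi>: "pq_labelling V E p q \<phi>"
    and pot: "\<And>u w. (u, w) \<in> E \<Longrightarrow> \<phi> (u, w) - \<psi> (u, w) = F u - F w"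
    and top: "\<forall>v\<in>V. F v \<le> M" and X: "X = {v \<in> V. F v = M}" "X \<noteq> {}" "X \<subset> V"
  shows "cut_relabel_step V E p q \<phi> (cut_relabelling V E X 1 \<phi>)"
    and "pq_labelling V E p q (cut_relabelling V E X 1 \<phi>)"
proof -
  have \<psi>_bounds: "\<forall>e\<in>E. q \<le> \<psi> e \<and> \<psi> e \<le> p - q" and \<phi>_bounds: "\<forall>e\<in>E. q \<le> \<phi> e \<and> \<phi> e \<le> p - q"
    using \<psi> \<phi> unfolding pq_labelling_def by auto
  have drop: "F w < F u" if "u \<in> X" "w \<in> V - X" for u w
    using that top X(1) by force
  have out: "\<forall>e\<in>out_cut V E X. q + 1 \<le> \<phi> e"
    using pot \<psi>_bounds drop unfolding out_cut_def by fastforce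
  have into: "\<forall>e\<in>in_cut V E X. \<phi> e \<le> p - q - 1"
    using pot \<psi>_bounds drop unfolding in_cut_def by fastforce
  show "cut_relabel_step V E p q \<phi> (cut_relabelling V E X 1 \<phi>)"
    unfolding cut_relabel_step_iff using \<phi> X(2,3) \<open>2 \<le> p\<close> out into
    by (intro conjI exI[of _ X] exI[of _ 1]) auto
  have "\<forall>e\<in>E. q \<le> cut_relabelling V E X 1 \<phi> e \<and> cut_relabelling V E X 1 \<phi> e \<le> p - q"
    using \<phi>_bounds out into unfolding cut_relabelling_def by auto
  moreover have "cut_relabelling V E X 1 \<phi> (u, w) - \<psi> (u, w)
                   = (F u - of_bool (u \<in> X)) - (F w - of_bool (w \<in> X))" if "(u, w) \<in> E" for u w
    using pot[OF that] cut_relabelling_potential[OF EV that, of X 1 \<phi>] by simp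
  ultimately show "pq_labelling V E p q (cut_relabelling V E X 1 \<phi>)"
    by (rule pq_labelling_if_potential[OF \<psi> \<open>q > 0\<close>])
qed

lemma cut_reachable_if_potential:
  assumes EV: "E \<subseteq> V \<times> V" and fin: "finite V" and "2 \<le> p" and "q > 0"
    and \<psi>: "pq_labelling V E p q \<psi>" and \<phi>: "pq_labelling V E p q \<phi>"
    and pot: "\<forall>u w. (u, w) \<in> E \<longrightarrow> \<phi> (u, w) - \<psi> (u, w) = F u - F w"
  shows "cut_reachable V E p q \<phi> \<psi>"
proof -
  define c where "c = Min (insert 0 (F ` V))"
  have "cut_reachable V E p q \<phi> \<psi>"
    if "\<forall>v\<in>V. c \<le> F v" and "pq_labelling V E p q \<phi>"
      and "\<forall>u w. (u, w) \<in> E \<longrightarrow> \<phi> (u, w) - \<psi> (u, w) = F u - F w" for F \<phi>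
    using that
  proof (induction "\<Sum>v\<in>V. nat (F v - c)" arbitrary: F \<phi> rule: less_induct)
    case less
    show ?case
    proof (cases "\<forall>u\<in>V. \<forall>w\<in>V. F u = F w")
      case True
      then have "\<forall>e\<in>E. \<phi> e = \<psi> e" using less.prems(3) EV by fastforce
      then show ?thesis unfolding cut_reachable_def by blast
    next
      case False
      define M where "M = Max (F ` V)"
      define X where "X = {v \<in> V. F v = M}"
      have top: "\<forall>v\<in>V. F v \<le> M" unfolding M_def using fin by simp
      have "M \<in> F ` V" unfolding M_def using fin False by (intro Max_in) auto
      then obtain m where m: "m \<in> X" unfolding X_def by auto
      obtain b where b: "b \<in> V" "F b < M" using False top by (metis antisym_conv2)
      then have "X \<subset> V" unfolding X_def by auto
      define \<phi>' where "\<phi>' = cut_relabelling V E X 1 \<phi>"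
      define F' where "F' v = F v - of_bool (v \<in> X)" for v
      have step: "cut_relabel_step V E p q \<phi> \<phi>'" and \<phi>': "pq_labelling V E p q \<phi>'"
        using cut_relabel_step_at_top_level[OF EV \<open>2 \<le> p\<close> \<open>q > 0\<close> \<psi> less.prems(2) _ top X_def]
          less.prems(3) m \<open>X \<subset> V\<close> unfolding \<phi>'_def by blast+
      have pot': "\<forall>u w. (u, w) \<in> E \<longrightarrow> \<phi>' (u, w) - \<psi> (u, w) = F' u - F' w"
      proof (intro allI impI)
        fix u w assume uw: "(u, w) \<in> E"
        then show "\<phi>' (u, w) - \<psi> (u, w) = F' u - F' w"
          using less.prems(3) uw cut_relabelling_potential[OF EV uw, of X 1 \<phi>]
          unfolding \<phi>'_def F'_def by fastforce
      qed
      have c': "\<forall>v\<in>V. c \<le> F' v"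
        using less.prems(1) b unfolding F'_def X_def by (auto simp: of_bool_def)
      have "m \<in> V" "F' m = F m - 1" using m unfolding X_def F'_def by auto
      then have "(\<Sum>v\<in>V. nat (F' v - c)) < (\<Sum>v\<in>V. nat (F v - c))"
        using c' by (intro sum_strict_mono_ex1[OF fin] bexI[of _ m]) (auto simp: F'_def)
      then have "cut_reachable V E p q \<phi>' \<psi>" using less.hyps c' \<phi>' pot' by blast
      then show ?thesis
        using step unfolding cut_reachable_def by (meson converse_rtranclp_into_rtranclp)
    qed
  qed
  moreover have "\<forall>v\<in>V. c \<le> F v" unfolding c_def using fin by simp
  ultimately show ?thesis using \<phi> pot by blast
qed


theorem theorem2p2:
  fixes V :: "'v set" and E :: "('v \<times> 'v) set" and p q :: int
    and \<phi> \<psi> :: "'v \<times> 'v \<Rightarrow> int"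
  assumes "p > 0" and "q > 0" and "real_of_int p / real_of_int q \<ge> 2"
    and "oriented_graph V E" and "connected_graph V E"
    and "pq_labelling V E p q \<phi>" and "pq_labelling V E p q \<psi>"
  shows "cut_reachable V E p q \<phi> \<psi> \<longleftrightarrow>
         (\<forall>vs. is_cycle V E vs \<longrightarrow> cycle_value E p \<phi> vs = cycle_value E p \<psi> vs)"
proof
  have EV: "E \<subseteq> V \<times> V" using assms(4) unfolding oriented_graph_def by auto
  show "cut_reachable V E p q \<phi> \<psi> \<Longrightarrow>
        \<forall>vs. is_cycle V E vs \<longrightarrow> cycle_value E p \<phi> vs = cycle_value E p \<psi> vs"
    using cut_reachable_cycle_value[OF EV] by blast
  assume cycles: "\<forall>vs. is_cycle V E vs \<longrightarrow> cycle_value E p \<phi> vs = cycle_value E p \<psi> vs"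
  let ?d = "signed_label E (\<lambda>e. \<phi> e - \<psi> e)"
  have antisym: "\<And>x y. adjacent E x y \<Longrightarrow> ?d x y + ?d y x = 0"
    using signed_label_antisym[OF assms(4)] by blast
  have "walk_sum ?d (vs @ [hd vs]) = 0" if "is_cycle V E vs" for vs
  proof -
    have "vs \<noteq> []" using that unfolding is_cycle_def by auto
    then show ?thesis using that cycles cycle_value_diff[of vs E p \<phi> \<psi>] by simp
  qed
  then have "\<And>cs. successively (adjacent E) (cs @ [hd cs]) \<Longrightarrow> walk_sum ?d (cs @ [hd cs]) = 0"
    using closed_walk_sum_eq_0[of V E ?d, OF assms(4) antisym] by blast
  then obtain F where "\<forall>u w. (u, w) \<in> E \<longrightarrow> ?d u w = F u - F w"
    using potential_if_closed_walk_sums_eq_0[of E V ?d, OF EV assms(5) antisym] by blast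
  then have pot: "\<forall>u w. (u, w) \<in> E \<longrightarrow> \<phi> (u, w) - \<psi> (u, w) = F u - F w"
    unfolding signed_label_def by simp
  \<comment> \<open>the ratio bound is needed only to make relabelling by \<open>\<alpha> = 1 \<le> p - 1\<close> admissible\<close>
  have "2 * real_of_int q \<le> real_of_int p" using assms(2,3) by (simp add: le_divide_eq)
  then have "2 \<le> p" using assms(2) by linarith
  moreover have "finite V" using assms(4) unfolding oriented_graph_def by simp
  ultimately show "cut_reachable V E p q \<phi> \<psi>"
    using cut_reachable_if_potential[OF EV _ _ assms(2,7,6) pot] by blast
qed

end
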